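(* Let $(E,X,Y)$, with $X=(X_1,\dots,X_d)$, be generated by a structural causal model whose graph $\mathcal{G}$ is a DAG, whose distribution is faithful (and Markov) with respect to $\mathcal{G}$, and in which $E$ is exogenous (i.e. $E$ has no parents). Assume that $E$ is not a parent of $Y$ in $\mathcal{G}$. Then (i) $S_{\mathrm{IAS}}\in\mathcal{I}$, and (ii) $S_{\mathrm{ICP}}\subseteq S_{\mathrm{IAS}}$, with equality if and only if $S_{\mathrm{ICP}}\in\mathcal{I}$.
   Context: For $S\subseteq[d]=\{1,\dots,d\}$, write $X_S=(X_j)_{j\in S}$. A set $S\subseteq[d]$ is called invariant if $Y\perp\!\!\!\perp E\mid X_S$; $\mathcal{I}$ denotes the collection of all invariant sets. A set $S$ is minimally invariant if $S\in\mathcal{I}$ and no proper subset $S'\subsetneq S$ lies in $\mathcal{I}$. Define $S_{\mathrm{ICP}}=\bigcap_{S\in\mathcal{I}}S$ (with $S_{\mathrm{ICP}}=\emptyset$ if $\mathcal{I}=\emptyset$) and $S_{\mathrm{IAS}}=\bigcup_{S\text{ minimally invariant}}S$ (with the union over the empty collection being $\emptyset$). *)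

theory Defs
  imports Main
begin

text \<open>Nodes of the causal graph: the environment E, the response Y, and covariates X_1..X_d.\<close>
datatype node = Env | Tgt | Cov nat

definition nodes :: "nat \<Rightarrow> node set" where
  "nodes d = {Env, Tgt} \<union> Cov ` {1..d}"

text \<open>A directed graph is an edge relation: G u v means u \<rightarrow> v.\<close>
definition is_dag :: "nat \<Rightarrow> (node \<Rightarrow> node \<Rightarrow> bool) \<Rightarrow> bool" where
  "is_dag d G \<longleftrightarrow> (\<forall>u v. G u v \<longrightarrow> u \<in> nodes d \<and> v \<in> nodes d) \<and> (\<forall>v. \<not> G\<^sup>+\<^sup>+ v v)"

definition adj :: "(node \<Rightarrow> node \<Rightarrow> bool) \<Rightarrow> node \<Rightarrow> node \<Rightarrow> bool" where
  "adj G u v \<longleftrightarrow> G u v \<or> G v u"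

definition is_path :: "(node \<Rightarrow> node \<Rightarrow> bool) \<Rightarrow> node list \<Rightarrow> node \<Rightarrow> node \<Rightarrow> bool" where
  "is_path G p a b \<longleftrightarrow> p \<noteq> [] \<and> hd p = a \<and> last p = b \<and> distinct p \<and>
     (\<forall>i. Suc i < length p \<longrightarrow> adj G (p ! i) (p ! Suc i))"

definition collider :: "(node \<Rightarrow> node \<Rightarrow> bool) \<Rightarrow> node list \<Rightarrow> nat \<Rightarrow> bool" where
  "collider G p i \<longleftrightarrow> G (p ! (i - 1)) (p ! i) \<and> G (p ! Suc i) (p ! i)"

definition active_path :: "(node \<Rightarrow> node \<Rightarrow> bool) \<Rightarrow> node set \<Rightarrow> node list \<Rightarrow> bool" where
  "active_path G Z p \<longleftrightarrow> (\<forall>i. 0 < i \<and> Suc i < length p \<longrightarrow>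
     (if collider G p i then (\<exists>w \<in> Z. G\<^sup>*\<^sup>* (p ! i) w) else p ! i \<notin> Z))"

definition dsep :: "(node \<Rightarrow> node \<Rightarrow> bool) \<Rightarrow> node set \<Rightarrow> node set \<Rightarrow> node set \<Rightarrow> bool" where
  "dsep G A B Z \<longleftrightarrow> \<not> (\<exists>a\<in>A. \<exists>b\<in>B. \<exists>p. is_path G p a b \<and> active_path G Z p)"

text \<open>The conditional independence relation of the distribution of (E,X,Y) is modelled
  abstractly: indep A B Z means  X_A \<perp> X_B | X_Z.\<close>
definition markov_faithful ::
  "nat \<Rightarrow> (node \<Rightarrow> node \<Rightarrow> bool) \<Rightarrow> (node set \<Rightarrow> node set \<Rightarrow> node set \<Rightarrow> bool) \<Rightarrow> bool" where
  "markov_faithful d G indep \<longleftrightarrow>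
     (\<forall>A B Z. A \<subseteq> nodes d \<and> B \<subseteq> nodes d \<and> Z \<subseteq> nodes d \<and>
        A \<inter> B = {} \<and> A \<inter> Z = {} \<and> B \<inter> Z = {} \<longrightarrow> (indep A B Z \<longleftrightarrow> dsep G A B Z))"

definition invariant ::
  "nat \<Rightarrow> (node set \<Rightarrow> node set \<Rightarrow> node set \<Rightarrow> bool) \<Rightarrow> nat set \<Rightarrow> bool" where
  "invariant d indep S \<longleftrightarrow> S \<subseteq> {1..d} \<and> indep {Tgt} {Env} (Cov ` S)"

definition inv_sets :: "nat \<Rightarrow> (node set \<Rightarrow> node set \<Rightarrow> node set \<Rightarrow> bool) \<Rightarrow> nat set set" where
  "inv_sets d indep = {S. invariant d indep S}"

definition min_invariant ::
  "nat \<Rightarrow> (node set \<Rightarrow> node set \<Rightarrow> node set \<Rightarrow> bool) \<Rightarrow> nat set \<Rightarrow> bool" where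
  "min_invariant d indep S \<longleftrightarrow> invariant d indep S \<and> (\<forall>S'. S' \<subset> S \<longrightarrow> \<not> invariant d indep S')"

definition S_ICP :: "nat \<Rightarrow> (node set \<Rightarrow> node set \<Rightarrow> node set \<Rightarrow> bool) \<Rightarrow> nat set" where
  "S_ICP d indep = (if inv_sets d indep = {} then {} else \<Inter> (inv_sets d indep))"

definition S_IAS :: "nat \<Rightarrow> (node set \<Rightarrow> node set \<Rightarrow> node set \<Rightarrow> bool) \<Rightarrow> nat set" where
  "S_IAS d indep = \<Union> {S. min_invariant d indep S}"

end

theory Submission
  imports Defs
begin

text \<open>Let A be the set of covariates that are ancestors of Y. If an active path from Y to the
  parentless E is conditioned only on ancestors of Y, each of its non-colliders is an ancestor
  of Y: following the arrows out of it along the path one reaches Y or a collider, and every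
  collider leads into the conditioning set. Consequently A is invariant (E is not a parent of Y);
  S \<inter> A is invariant whenever S is, so every minimally invariant set lies in A; and invariance
  passes from S to every T with S \<subseteq> T \<subseteq> A, because a collider that is active given T but not
  given S can be bypassed by the directed path from it down to Y. Hence S_IAS, which contains a
  minimally invariant set and lies in A, is invariant, and the rest is set algebra.\<close>

lemma is_path_drop:
  assumes "is_path G p a b" "l < length p"
  shows "is_path G (drop l p) (p ! l) b"
  using assms unfolding is_path_def by (auto simp: hd_drop_conv_nth last_drop)

lemma collider_drop:
  assumes "0 < i" "l + i < length p"
  shows "collider G (drop l p) i \<longleftrightarrow> collider G p (l + i)"
proof -
  have "l + (i - 1) = l + i - 1" using assms by simp
  then show ?thesis using assms unfolding collider_def by simp
qed

lemma active_path_drop: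
  assumes "active_path G Z p" "l < length p"
  shows "active_path G Z (drop l p)"
  unfolding active_path_def
proof (intro allI impI)
  fix i assume i: "0 < i \<and> Suc i < length (drop l p)"
  then have "0 < l + i \<and> Suc (l + i) < length p" by auto
  with assms(1) show "if collider G (drop l p) i then (\<exists>w \<in> Z. G\<^sup>*\<^sup>* (drop l p ! i) w)
      else drop l p ! i \<notin> Z"
    using collider_drop[of i l p G] i unfolding active_path_def by auto
qed

lemma is_path_Cons:
  assumes q: "is_path G q x e" and "G x x'" "x' \<notin> set q"
  shows "is_path G (x' # q) x' e"
  unfolding is_path_def
proof (intro conjI allI impI)
  have "q ! 0 = x" using q unfolding is_path_def by (metis hd_conv_nth)
  moreover fix i assume "Suc i < length (x' # q)"
  ultimately show "adj G ((x' # q) ! i) ((x' # q) ! Suc i)"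
    using q \<open>G x x'\<close> unfolding is_path_def adj_def by (cases i) auto
qed (use assms in \<open>auto simp: is_path_def\<close>)

lemma active_path_Cons:
  assumes q: "is_path G q x e" and act: "active_path G Z q"
    and "G x x'" "\<not> G x' x" "x \<notin> Z"
  shows "active_path G Z (x' # q)"
  unfolding active_path_def
proof (intro allI impI)
  fix i assume i: "0 < i \<and> Suc i < length (x' # q)"
  then obtain j where j: "i = Suc j" by (cases i) auto
  have q0: "q ! 0 = x" using q unfolding is_path_def by (metis hd_conv_nth)
  show "if collider G (x' # q) i then (\<exists>w \<in> Z. G\<^sup>*\<^sup>* ((x' # q) ! i) w) else (x' # q) ! i \<notin> Z"
  proof (cases j)
    case 0
    then show ?thesis using j q0 assms(4,5) by (simp add: collider_def)
  next
    case (Suc m)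
    then have "collider G (x' # q) i \<longleftrightarrow> collider G q j" using j by (simp add: collider_def)
    moreover have "0 < j \<and> Suc j < length q" using i j Suc by auto
    ultimately show ?thesis using act j unfolding active_path_def by auto
  qed
qed

lemma active_path_extend_to_descendant:
  assumes acyclic: "\<forall>v. \<not> G\<^sup>+\<^sup>+ v v"
    and "(\<lambda>u v. G u v \<and> u \<notin> Z)\<^sup>*\<^sup>* x y"
    and "is_path G q x e" "active_path G Z q"
  shows "\<exists>p. is_path G p y e \<and> active_path G Z p"
  using assms(2-4)
proof (induction arbitrary: q rule: converse_rtranclp_induct)
  case base
  then show ?case by blast
next
  case (step x x')
  then have edge: "G x x'" "x \<notin> Z" by auto
  show ?case
  proof (cases "x' \<in> set q")
    case True
    then obtain l where "l < length q" "q ! l = x'" by (meson in_set_conv_nth)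
    then show ?thesis
      using step.IH is_path_drop[OF step.prems(1)] active_path_drop[OF step.prems(2)] by metis
  next
    case False
    have "\<not> G x' x" using acyclic edge by (metis tranclp.r_into_trancl tranclp_trans)
    then show ?thesis
      using step.IH is_path_Cons[OF step.prems(1) edge(1) False]
        active_path_Cons[OF step.prems edge(1) _ edge(2)] by blast
  qed
qed

lemma rtranclp_avoiding_if_descendants_avoid:
  assumes "G\<^sup>*\<^sup>* x y" "\<And>u. G\<^sup>*\<^sup>* x u \<Longrightarrow> u \<notin> Z"
  shows "(\<lambda>u v. G u v \<and> u \<notin> Z)\<^sup>*\<^sup>* x y"
  using assms(1)
proof (induction rule: rtranclp_induct)
  case base
  then show ?case by simp
next
  case (step u v)
  then show ?case using assms(2) by (simp add: rtranclp.rtrancl_into_rtrancl)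
qed

lemma path_forward_edge_reaches_collider_or_end:
  assumes adj: "\<And>i. Suc i < length p \<Longrightarrow> adj G (p ! i) (p ! Suc i)"
    and "Suc i < length p" "G (p ! i) (p ! Suc i)"
  shows "\<exists>j>i. j < length p \<and> G\<^sup>+\<^sup>+ (p ! i) (p ! j) \<and> (Suc j = length p \<or> collider G p j)"
  using assms(2,3)
proof (induction "length p - i" arbitrary: i rule: less_induct)
  case less
  show ?case
  proof (cases "Suc (Suc i) = length p \<or> collider G p (Suc i)")
    case True
    then show ?thesis using less.prems by (intro exI[of _ "Suc i"]) auto
  next
    case False
    then have "Suc (Suc i) < length p" "G (p ! Suc i) (p ! Suc (Suc i))"
      using adj[of "Suc i"] less.prems unfolding collider_def adj_def by auto
    moreover have "length p - Suc i < length p - i" using less.prems(1) by simp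
    ultimately obtain j where "j > Suc i" "j < length p" "G\<^sup>+\<^sup>+ (p ! Suc i) (p ! j)"
        "Suc j = length p \<or> collider G p j"
      using less.hyps[of "Suc i"] by blast
    then show ?thesis using less.prems(2) by (meson Suc_lessD tranclp_into_tranclp2)
  qed
qed

lemma path_backward_edge_reaches_collider_or_start:
  assumes adj: "\<And>i. Suc i < length p \<Longrightarrow> adj G (p ! i) (p ! Suc i)"
    and "Suc i < length p" "G (p ! Suc i) (p ! i)"
  shows "\<exists>j\<le>i. G\<^sup>+\<^sup>+ (p ! Suc i) (p ! j) \<and> (j = 0 \<or> collider G p j)"
  using assms(2,3)
proof (induction i)
  case 0
  then show ?case by auto
next
  case (Suc i)
  show ?case
  proof (cases "collider G p (Suc i)")
    case True
    then show ?thesis using Suc.prems by (intro exI[of _ "Suc i"]) auto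
  next
    case False
    then have "G (p ! Suc i) (p ! i)"
      using adj[of i] Suc.prems unfolding collider_def adj_def by auto
    then obtain j where "j \<le> i" "G\<^sup>+\<^sup>+ (p ! Suc i) (p ! j)" "j = 0 \<or> collider G p j"
      using Suc.IH Suc.prems(1) by auto
    then show ?thesis using Suc.prems(2) by (intro exI[of _ j]) (auto intro: tranclp_into_tranclp2)
  qed
qed

lemma active_path_noncollider_ancestor:
  assumes anc: "\<forall>z\<in>Z. G\<^sup>*\<^sup>* z y"
    and p: "is_path G p y e" and act: "active_path G Z p" and parentless: "\<forall>v. \<not> G v e"
    and k: "0 < k" "Suc k < length p" "\<not> collider G p k"
  shows "G\<^sup>*\<^sup>* (p ! k) y"
proof -
  have adjp: "\<And>i. Suc i < length p \<Longrightarrow> adj G (p ! i) (p ! Suc i)"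
    using p unfolding is_path_def by auto
  have collider_ancestor: "G\<^sup>*\<^sup>* (p ! j) y"
    if interior: "0 < j" "Suc j < length p" and col: "collider G p j" for j
  proof -
    have "if collider G p j then (\<exists>w \<in> Z. G\<^sup>*\<^sup>* (p ! j) w) else p ! j \<notin> Z"
      using act interior unfolding active_path_def by blast
    then obtain w where "w \<in> Z" "G\<^sup>*\<^sup>* (p ! j) w" using col by auto
    then show ?thesis using anc by (meson rtranclp_trans)
  qed
  have km: "Suc (k - 1) = k" using k(1) by simp
  have "adj G (p ! (k - 1)) (p ! k)" using adjp[of "k - 1"] km k(2) by simp
  then have "G (p ! k) (p ! Suc k) \<or> G (p ! Suc (k - 1)) (p ! (k - 1))"
    using adjp[OF k(2)] k(3) km unfolding collider_def adj_def by auto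
  then show ?thesis
  proof
    assume "G (p ! k) (p ! Suc k)"
    then obtain j where j: "j > k" "j < length p" "G\<^sup>+\<^sup>+ (p ! k) (p ! j)"
        "Suc j = length p \<or> collider G p j"
      using path_forward_edge_reaches_collider_or_end[OF adjp k(2)] by blast
    have "p ! j \<noteq> e" using j(3) parentless by (metis tranclp.cases)
    then have "Suc j < length p"
      using p j(2) unfolding is_path_def by (metis diff_Suc_1 last_conv_nth Suc_lessI)
    then have "G\<^sup>*\<^sup>* (p ! j) y" using j(1,4) k(1) collider_ancestor[of j] by simp
    then show ?thesis using j(3) by (meson rtranclp_trans tranclp_into_rtranclp)
  next
    assume "G (p ! Suc (k - 1)) (p ! (k - 1))"
    then obtain j where j: "j \<le> k - 1" "G\<^sup>+\<^sup>+ (p ! k) (p ! j)" "j = 0 \<or> collider G p j"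
      using path_backward_edge_reaches_collider_or_start[OF adjp, of "k - 1"] km k(2) by auto
    have "p ! 0 = y" using p unfolding is_path_def by (metis hd_conv_nth)
    then have "G\<^sup>*\<^sup>* (p ! j) y"
    proof (cases "j = 0")
      case False
      then show ?thesis using j(1,3) k(2) collider_ancestor[of j] by simp
    qed simp
    then show ?thesis using j(2) by (meson rtranclp_trans tranclp_into_rtranclp)
  qed
qed

lemma active_path_add_nonancestors:
  assumes anc: "\<forall>z\<in>Z. G\<^sup>*\<^sup>* z y" and "Z \<subseteq> Z'" and nonanc: "\<forall>z\<in>Z' - Z. \<not> G\<^sup>*\<^sup>* z y"
    and p: "is_path G p y e" and act: "active_path G Z p" and parentless: "\<forall>v. \<not> G v e"
  shows "active_path G Z' p"
  unfolding active_path_def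
proof (intro allI impI)
  fix k assume k: "0 < k \<and> Suc k < length p"
  then have "if collider G p k then (\<exists>w \<in> Z. G\<^sup>*\<^sup>* (p ! k) w) else p ! k \<notin> Z"
    using act unfolding active_path_def by blast
  moreover have "\<not> collider G p k \<Longrightarrow> G\<^sup>*\<^sup>* (p ! k) y"
    using active_path_noncollider_ancestor[OF anc p act parentless] k by blast
  ultimately show "if collider G p k then (\<exists>w \<in> Z'. G\<^sup>*\<^sup>* (p ! k) w) else p ! k \<notin> Z'"
    using \<open>Z \<subseteq> Z'\<close> nonanc by (auto split: if_splits)
qed

lemma active_path_shrink_conditioning:
  assumes acyclic: "\<forall>v. \<not> G\<^sup>+\<^sup>+ v v"
    and anc: "\<forall>z\<in>Z'. G\<^sup>*\<^sup>* z y" and "Z \<subseteq> Z'"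
    and "is_path G q x e" "active_path G Z' q" "(\<lambda>u v. G u v \<and> u \<notin> Z)\<^sup>*\<^sup>* x y"
  shows "\<exists>p. is_path G p y e \<and> active_path G Z p"
  using assms(4-6)
proof (induction "length q" arbitrary: q x rule: less_induct)
  case less
  show ?case
  proof (cases "active_path G Z q")
    case True
    then show ?thesis using active_path_extend_to_descendant[OF acyclic less.prems(3,1)] by blast
  next
    case False
    then obtain k where k: "0 < k" "Suc k < length q"
      and "\<not> (if collider G q k then (\<exists>w \<in> Z. G\<^sup>*\<^sup>* (q ! k) w) else q ! k \<notin> Z)"
      unfolding active_path_def by blast
    moreover have "if collider G q k then (\<exists>w \<in> Z'. G\<^sup>*\<^sup>* (q ! k) w) else q ! k \<notin> Z'"
      using less.prems(2) k unfolding active_path_def by blast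
    ultimately obtain w where "w \<in> Z'" "G\<^sup>*\<^sup>* (q ! k) w"
      and no_desc: "\<And>u. G\<^sup>*\<^sup>* (q ! k) u \<Longrightarrow> u \<notin> Z"
      using \<open>Z \<subseteq> Z'\<close> by (auto split: if_splits)
    then have "G\<^sup>*\<^sup>* (q ! k) y" using anc by (meson rtranclp_trans)
    then have "(\<lambda>u v. G u v \<and> u \<notin> Z)\<^sup>*\<^sup>* (q ! k) y"
      using no_desc by (rule rtranclp_avoiding_if_descendants_avoid)
    moreover have "is_path G (drop k q) (q ! k) e" "active_path G Z' (drop k q)"
      using is_path_drop[OF less.prems(1)] active_path_drop[OF less.prems(2)] k by auto
    moreover have "length (drop k q) < length q" using k by simp
    ultimately show ?thesis using less.hyps by blast
  qed
qed

lemma invariant_iff_no_active_path: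
  assumes "markov_faithful d G indep"
  shows "invariant d indep S \<longleftrightarrow>
    S \<subseteq> {1..d} \<and> \<not> (\<exists>p. is_path G p Tgt Env \<and> active_path G (Cov ` S) p)"
proof (cases "S \<subseteq> {1..d}")
  case True
  then have "Cov ` S \<subseteq> nodes d" "{Tgt} \<subseteq> nodes d" "{Env} \<subseteq> nodes d"
    unfolding nodes_def by auto
  then have "indep {Tgt} {Env} (Cov ` S) \<longleftrightarrow> dsep G {Tgt} {Env} (Cov ` S)"
    using assms unfolding markov_faithful_def by blast
  then show ?thesis using True unfolding invariant_def dsep_def by simp
qed (simp add: invariant_def)

definition cov_ancestors :: "nat \<Rightarrow> (node \<Rightarrow> node \<Rightarrow> bool) \<Rightarrow> nat set" where
  "cov_ancestors d G = {t \<in> {1..d}. G\<^sup>*\<^sup>* (Cov t) Tgt}"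

lemma cov_ancestors_reach_Tgt:
  "T \<subseteq> cov_ancestors d G \<Longrightarrow> \<forall>z \<in> Cov ` T. G\<^sup>*\<^sup>* z Tgt"
  unfolding cov_ancestors_def by auto

lemma invariant_cov_ancestors:
  assumes dag: "is_dag d G" and mf: "markov_faithful d G indep"
    and exo: "\<forall>v. \<not> G v Env" and not_parent: "\<not> G Env Tgt"
  shows "invariant d indep (cov_ancestors d G)"
proof -
  let ?Z = "Cov ` cov_ancestors d G"
  have anc: "\<forall>z \<in> ?Z. G\<^sup>*\<^sup>* z Tgt" by (rule cov_ancestors_reach_Tgt[of _ d]) simp
  have "\<not> active_path G ?Z p" if p: "is_path G p Tgt Env" for p
  proof
    assume act: "active_path G ?Z p"
    have p0: "p ! 0 = Tgt" and pl: "p ! (length p - 1) = Env" and "distinct p" "p \<noteq> []"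
      using p unfolding is_path_def by (auto simp: hd_conv_nth last_conv_nth)
    have edge: "adj G Tgt (p ! 1)" if "1 < length p"
      using p that p0 unfolding is_path_def by auto
    have "length p \<noteq> 2"
    proof
      assume "length p = 2"
      then have "adj G Tgt Env" using edge pl by simp
      then show False using exo not_parent unfolding adj_def by blast
    qed
    moreover have "length p \<noteq> 1" using p0 pl by auto
    moreover have "length p \<noteq> 0" using \<open>p \<noteq> []\<close> by simp
    ultimately have long: "2 < length p" by linarith
    have act1: "if collider G p 1 then (\<exists>w \<in> ?Z. G\<^sup>*\<^sup>* (p ! 1) w) else p ! 1 \<notin> ?Z"
      using act \<open>2 < length p\<close> unfolding active_path_def by (metis Suc_1 zero_less_one)
    show False
    proof (cases "collider G p 1")
      case True
      then obtain w where "w \<in> ?Z" "G\<^sup>*\<^sup>* (p ! 1) w" using act1 by auto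
      then have "G\<^sup>*\<^sup>* (p ! 1) Tgt" using anc by (meson rtranclp_trans)
      moreover have "G Tgt (p ! 1)" using True p0 unfolding collider_def by simp
      ultimately have "G\<^sup>+\<^sup>+ Tgt Tgt" by (metis rtranclp_into_tranclp2)
      then show False using dag unfolding is_dag_def by blast
    next
      case False
      have indices: "1 < length p" "0 < length p" "length p - 1 < length p"
        using long by auto
      have "p ! 1 \<noteq> Tgt" "p ! 1 \<noteq> Env"
        using nth_eq_iff_index_eq[OF \<open>distinct p\<close> indices(1) indices(2)]
          nth_eq_iff_index_eq[OF \<open>distinct p\<close> indices(1) indices(3)] long p0 pl by auto
      moreover have "adj G Tgt (p ! 1)" using edge long by simp
      then have "p ! 1 \<in> nodes d" using dag unfolding is_dag_def adj_def by blast
      moreover have "G\<^sup>*\<^sup>* (p ! 1) Tgt"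
        using active_path_noncollider_ancestor[OF anc p act exo, of 1] long False by simp
      ultimately have "p ! 1 \<in> ?Z" unfolding nodes_def cov_ancestors_def by auto
      then show False using act1 False by simp
    qed
  qed
  moreover have "cov_ancestors d G \<subseteq> {1..d}" unfolding cov_ancestors_def by auto
  ultimately show ?thesis using invariant_iff_no_active_path[OF mf] by blast
qed

lemma invariant_Int_cov_ancestors:
  assumes mf: "markov_faithful d G indep" and exo: "\<forall>v. \<not> G v Env"
    and S: "invariant d indep S"
  shows "invariant d indep (S \<inter> cov_ancestors d G)"
proof -
  let ?A = "cov_ancestors d G"
  have Sd: "S \<subseteq> {1..d}" and no_path: "\<nexists>p. is_path G p Tgt Env \<and> active_path G (Cov ` S) p"
    using S unfolding invariant_iff_no_active_path[OF mf] by auto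
  have anc: "\<forall>z \<in> Cov ` (S \<inter> ?A). G\<^sup>*\<^sup>* z Tgt"
    by (rule cov_ancestors_reach_Tgt[of _ d]) simp
  have nonanc: "\<forall>z \<in> Cov ` S - Cov ` (S \<inter> ?A). \<not> G\<^sup>*\<^sup>* z Tgt"
    using Sd unfolding cov_ancestors_def by auto
  have "\<not> active_path G (Cov ` (S \<inter> ?A)) p" if p: "is_path G p Tgt Env" for p
  proof
    assume "active_path G (Cov ` (S \<inter> ?A)) p"
    then have "active_path G (Cov ` S) p"
      using active_path_add_nonancestors[OF anc _ nonanc p _ exo] by blast
    with p no_path show False by blast
  qed
  moreover have "S \<inter> ?A \<subseteq> {1..d}" using Sd by auto
  ultimately show ?thesis unfolding invariant_iff_no_active_path[OF mf] by blast
qed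

lemma invariant_mono_below_cov_ancestors:
  assumes dag: "is_dag d G" and mf: "markov_faithful d G indep"
    and S: "invariant d indep S" and "S \<subseteq> T" and T: "T \<subseteq> cov_ancestors d G"
  shows "invariant d indep T"
proof -
  have acyclic: "\<forall>v. \<not> G\<^sup>+\<^sup>+ v v" using dag unfolding is_dag_def by simp
  have no_path: "\<nexists>p. is_path G p Tgt Env \<and> active_path G (Cov ` S) p"
    using S unfolding invariant_iff_no_active_path[OF mf] by auto
  have "\<not> active_path G (Cov ` T) p" if p: "is_path G p Tgt Env" for p
  proof
    assume "active_path G (Cov ` T) p"
    then have "\<exists>p'. is_path G p' Tgt Env \<and> active_path G (Cov ` S) p'"
      using active_path_shrink_conditioning[OF acyclic cov_ancestors_reach_Tgt[OF T] _ p]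
        \<open>S \<subseteq> T\<close> by blast
    with no_path show False by blast
  qed
  moreover have "T \<subseteq> {1..d}" using T unfolding cov_ancestors_def by auto
  ultimately show ?thesis unfolding invariant_iff_no_active_path[OF mf] by blast
qed

lemma exists_min_invariant_subset:
  assumes "invariant d indep S"
  shows "\<exists>S'\<subseteq>S. min_invariant d indep S'"
proof -
  have "finite S" using assms unfolding invariant_def by (meson finite_atLeastAtMost finite_subset)
  then show ?thesis using assms
  proof (induction "card S" arbitrary: S rule: less_induct)
    case less
    show ?case
    proof (cases "min_invariant d indep S")
      case False
      then obtain S' where "S' \<subset> S" "invariant d indep S'"
        using less.prems unfolding min_invariant_def by blast
      then show ?thesis
        using less.hyps[of S'] less.prems(1) by (meson psubset_card_mono psubset_imp_subset
            rev_finite_subset subset_trans)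
    qed blast
  qed
qed

lemma min_invariant_subset:
  assumes "\<And>S. invariant d indep S \<Longrightarrow> invariant d indep (S \<inter> A)"
    and "min_invariant d indep S"
  shows "S \<subseteq> A"
  using assms unfolding min_invariant_def by blast

lemma invariant_S_IAS:
  assumes "invariant d indep A"
    and restrict: "\<And>S. invariant d indep S \<Longrightarrow> invariant d indep (S \<inter> A)"
    and mono: "\<And>S T. invariant d indep S \<Longrightarrow> S \<subseteq> T \<Longrightarrow> T \<subseteq> A \<Longrightarrow> invariant d indep T"
  shows "invariant d indep (S_IAS d indep)"
proof -
  obtain S0 where S0: "min_invariant d indep S0"
    using exists_min_invariant_subset assms(1) by blast
  have "S_IAS d indep \<subseteq> A"
    using min_invariant_subset[OF restrict] unfolding S_IAS_def by blast
  moreover have "S0 \<subseteq> S_IAS d indep" using S0 unfolding S_IAS_def by blast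
  ultimately show ?thesis using mono S0 unfolding min_invariant_def by blast
qed

lemma S_ICP_subset_S_IAS:
  assumes "invariant d indep A"
  shows "S_ICP d indep \<subseteq> S_IAS d indep"
proof -
  obtain S0 where S0: "min_invariant d indep S0"
    using exists_min_invariant_subset assms by blast
  then have "S_ICP d indep \<subseteq> S0"
    unfolding S_ICP_def inv_sets_def min_invariant_def by auto
  then show ?thesis using S0 unfolding S_IAS_def by blast
qed

lemma S_ICP_eq_S_IAS_iff:
  assumes "invariant d indep A" and IAS: "invariant d indep (S_IAS d indep)"
  shows "S_ICP d indep = S_IAS d indep \<longleftrightarrow> invariant d indep (S_ICP d indep)"
proof
  assume ICP: "invariant d indep (S_ICP d indep)"
  have ICP_subset: "S_ICP d indep \<subseteq> S" if "invariant d indep S" for S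
    using that unfolding S_ICP_def inv_sets_def by auto
  have "S = S_ICP d indep" if "min_invariant d indep S" for S
    using that ICP ICP_subset unfolding min_invariant_def by blast
  moreover obtain S0 where "min_invariant d indep S0"
    using exists_min_invariant_subset assms(1) by blast
  ultimately have "{S. min_invariant d indep S} = {S_ICP d indep}" by blast
  then show "S_ICP d indep = S_IAS d indep" unfolding S_IAS_def by simp
qed (use IAS in simp)

theorem proposition3:
  fixes d :: nat
    and G :: "node \<Rightarrow> node \<Rightarrow> bool"
    and indep :: "node set \<Rightarrow> node set \<Rightarrow> node set \<Rightarrow> bool"
  assumes dag: "is_dag d G"
    and mf: "markov_faithful d G indep"
    and exo: "\<forall>v. \<not> G v Env"
    and not_parent: "\<not> G Env Tgt"
  shows "S_IAS d indep \<in> inv_sets d indep \<and>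
         S_ICP d indep \<subseteq> S_IAS d indep \<and>
         (S_ICP d indep = S_IAS d indep \<longleftrightarrow> S_ICP d indep \<in> inv_sets d indep)"
proof -
  have A: "invariant d indep (cov_ancestors d G)"
    using invariant_cov_ancestors[OF dag mf exo not_parent] .
  have IAS: "invariant d indep (S_IAS d indep)"
    using invariant_S_IAS[OF A invariant_Int_cov_ancestors[OF mf exo]
        invariant_mono_below_cov_ancestors[OF dag mf]] .
  show ?thesis
    using IAS S_ICP_subset_S_IAS[OF A] S_ICP_eq_S_IAS_iff[OF A IAS] unfolding inv_sets_def by simp
qed

end
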